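(* Let $G$ be a digraph and $f$ a discrete Morse function on $G$ such that every vertex $v$ with $f(v)=0$ has out-degree $1$ and in-degree $1$. Let $(G',f')$ be a one-step $\mathcal M$-collapse of $(G,f)$. Then $\mathcal M(G',f')\subseteq\mathcal M(G,f)$.
   Context: A digraph $G=(V,E)$ consists of a set $V$ and $E\subseteq(V\times V)\setminus\{(v,v)\}$; $(u,v)\in E$ is written $u\to v$. The out-degree (in-degree) of $v$ is the number of edges starting (ending) at $v$. An allowed elementary $n$-path is a sequence $v_0\cdots v_n$ of vertices with $v_{i-1}\to v_i\in E$ for $1\le i\le n$. For allowed elementary paths, $\gamma'<\gamma$ means $\gamma'$ is obtained from $\gamma$ by deleting some entries. A map $f:V\to[0,+\infty)$ is a discrete Morse function on $G$ if for every allowed elementary path $v_0\cdots v_n$: (i) there is at most one index $i$ with $f(v_i)=0$ such that $v_0\cdots v_{i-1}v_{i+1}\cdots v_n$ is an allowed elementary $(n-1)$-path; (ii) there is at most one vertex $u$ with $f(u)=0$ such that for some $-1\le j\le n$ the sequence $v_0\cdots v_juv_{j+1}\cdots v_n$ (meaning $uv_0\cdots v_n$ if $j=-1$, $v_0\cdots v_nu$ if $j=n$) is an allowed elementary $(n+1)$-path. Set $f(v_0\cdots v_n)=\sum_if(v_i)$. $\mathcal M(G,f)$ is the set of pairs $(\alpha,\beta)$ with $\alpha$ an allowed elementary $n$-path, $\beta$ an allowed elementary $(n+1)$-path for some $n\ge0$, $\alpha<\beta$ and $f(\alpha)=f(\beta)$. One-step $\mathcal M$-collapse: let $v$ be a vertex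 with $f(v)=0$, with unique in-neighbour $u$ and out-neighbour $w$ ($u\to v\to w$), such that $u\to w$ is also an edge of $G$; then $G'$ has vertex set $V\setminus\{v\}$ and edge set $E\setminus\{u\to v,v\to w\}$, and $f'=f|_{V\setminus\{v\}}$ (a discrete Morse function on $G'$). *)

theory Defs
  imports Complex_Main "HOL-Library.Sublist"
begin

definition digraph :: "'a set \<Rightarrow> ('a \<times> 'a) set \<Rightarrow> bool" where
  "digraph V E \<longleftrightarrow> E \<subseteq> V \<times> V \<and> (\<forall>v. (v, v) \<notin> E)"

definition out_degree :: "('a \<times> 'a) set \<Rightarrow> 'a \<Rightarrow> nat" where
  "out_degree E v = card {w. (v, w) \<in> E}"

definition in_degree :: "('a \<times> 'a) set \<Rightarrow> 'a \<Rightarrow> nat" where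
  "in_degree E v = card {u. (u, v) \<in> E}"

text \<open>An allowed elementary n-path v0...vn is a list of length n+1 of vertices with
  consecutive entries joined by edges.\<close>
definition allowed_path :: "'a set \<Rightarrow> ('a \<times> 'a) set \<Rightarrow> 'a list \<Rightarrow> bool" where
  "allowed_path V E p \<longleftrightarrow> p \<noteq> [] \<and> set p \<subseteq> V \<and>
     (\<forall>i. Suc i < length p \<longrightarrow> (p ! i, p ! Suc i) \<in> E)"

definition path_value :: "('a \<Rightarrow> real) \<Rightarrow> 'a list \<Rightarrow> real" where
  "path_value f p = sum_list (map f p)"

definition discrete_morse :: "'a set \<Rightarrow> ('a \<times> 'a) set \<Rightarrow> ('a \<Rightarrow> real) \<Rightarrow> bool" where
  "discrete_morse V E f \<longleftrightarrow>
     (\<forall>v\<in>V. f v \<ge> 0) \<and>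
     (\<forall>p. allowed_path V E p \<longrightarrow>
        (\<forall>i j. i < length p \<and> f (p ! i) = 0 \<and> allowed_path V E (take i p @ drop (Suc i) p) \<and>
               j < length p \<and> f (p ! j) = 0 \<and> allowed_path V E (take j p @ drop (Suc j) p)
               \<longrightarrow> i = j) \<and>
        (\<forall>u u'. u \<in> V \<and> f u = 0 \<and> (\<exists>j\<le>length p. allowed_path V E (take j p @ u # drop j p)) \<and>
                u' \<in> V \<and> f u' = 0 \<and> (\<exists>j\<le>length p. allowed_path V E (take j p @ u' # drop j p))
               \<longrightarrow> u = u'))"

definition M_set :: "'a set \<Rightarrow> ('a \<times> 'a) set \<Rightarrow> ('a \<Rightarrow> real) \<Rightarrow> ('a list \<times> 'a list) set" where
  "M_set V E f = {(\<alpha>, \<beta>). allowed_path V E \<alpha> \<and> allowed_path V E \<beta> \<and>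
      length \<beta> = length \<alpha> + 1 \<and> subseq \<alpha> \<beta> \<and> path_value f \<alpha> = path_value f \<beta>}"

text \<open>One-step M-collapse of (V,E,f) at vertex v, giving (V',E') with f' = f restricted to V'.\<close>
definition one_step_M_collapse ::
  "'a set \<Rightarrow> ('a \<times> 'a) set \<Rightarrow> ('a \<Rightarrow> real) \<Rightarrow> 'a set \<Rightarrow> ('a \<times> 'a) set \<Rightarrow> bool" where
  "one_step_M_collapse V E f V' E' \<longleftrightarrow>
     (\<exists>v u w. v \<in> V \<and> f v = 0 \<and> {x. (x, v) \<in> E} = {u} \<and> {y. (v, y) \<in> E} = {w} \<and>
        (u, w) \<in> E \<and> V' = V - {v} \<and> E' = E - {(u, v), (v, w)})"

end

theory Submission
  imports Defs
begin

text \<open>A collapse only deletes a vertex and two edges, so every allowed path of the collapsed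
  digraph is an allowed path of the original one, and membership in M depends only on
  allowed paths and the values of f.\<close>

lemma allowed_path_mono:
  assumes "allowed_path V' E' p" and "V' \<subseteq> V" and "E' \<subseteq> E"
  shows "allowed_path V E p"
  using assms unfolding allowed_path_def by blast

lemma M_set_mono:
  assumes "V' \<subseteq> V" and "E' \<subseteq> E"
  shows "M_set V' E' f \<subseteq> M_set V E f"
  using allowed_path_mono[OF _ assms] unfolding M_set_def by auto

lemma one_step_M_collapse_subgraph:
  assumes "one_step_M_collapse V E f V' E'"
  shows "V' \<subseteq> V" and "E' \<subseteq> E"
  using assms unfolding one_step_M_collapse_def by auto

theorem lemma6p2:
  fixes V V' :: "'a set" and E E' :: "('a \<times> 'a) set" and f :: "'a \<Rightarrow> real"
  assumes "digraph V E"
    and "discrete_morse V E f"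
    and "\<forall>v\<in>V. f v = 0 \<longrightarrow> out_degree E v = 1 \<and> in_degree E v = 1"
    and "one_step_M_collapse V E f V' E'"
  shows "M_set V' E' f \<subseteq> M_set V E f"
  using M_set_mono one_step_M_collapse_subgraph[OF assms(4)] by blast

end
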